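(* Let $|\mathcal{T}|=2$, $|\mathcal{X}|\ge2$, $|\mathcal{Y}|\ge2$, and let $P\in\Delta_{\mathcal{T},\mathcal{X},\mathcal{Y}}$ be such that $\operatorname{supp}(\Delta_P)=\mathcal{T}\times\mathcal{X}\times\mathcal{Y}$. Let $\tilde Q$ lie in the relative interior of $\Delta_P$ with $\tilde Q\in\arg\max_{Q\in\Delta_P}H_Q(T\mid X,Y)$. Then the maximizer is not unique if either $UI(T:X\setminus Y)=0$ and $|\mathcal{Y}|>2$, or $UI(T:Y\setminus X)=0$ and $|\mathcal{X}|>2$.
   Context: $T,X,Y$ are random variables with finite state spaces $\mathcal{T},\mathcal{X},\mathcal{Y}$; $\Delta_{\mathcal{T},\mathcal{X},\mathcal{Y}}$ is the set of all joint distributions on $\mathcal{T}\times\mathcal{X}\times\mathcal{Y}$. For $P\in\Delta_{\mathcal{T},\mathcal{X},\mathcal{Y}}$, $\Delta_P=\{Q\in\Delta_{\mathcal{T},\mathcal{X},\mathcal{Y}}: Q(X=x,T=t)=P(X=x,T=t),\ Q(Y=y,T=t)=P(Y=y,T=t)\ \forall x,y,t\}$ and $\operatorname{supp}(\Delta_P)=\bigcup_{Q\in\Delta_P}\operatorname{supp}(Q)$. $UI(T:X\setminus Y)=\min_{Q\in\Delta_P}I_Q(T:X\mid Y)$ and $UI(T:Y\setminus X)=\min_{Q\in\Delta_P}I_Q(T:Y\mid X)$; $UI(T:X\setminus Y)=0$ holds iff $T$ is conditionally independent of $X$ given $Y$ under some (any) maximizer. *)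

theory Defs
  imports "HOL-Analysis.Analysis"
begin

text \<open>Joint distributions of (T,X,Y) on finite alphabets 't, 'x, 'y are represented
  as vectors in real^('t \<times> 'x \<times> 'y), so that the library notion rel_interior applies.\<close>

type_synonym ('t,'x,'y) jdist = "real ^ ('t \<times> 'x \<times> 'y)"

definition is_dist :: "('t::finite,'x::finite,'y::finite) jdist \<Rightarrow> bool" where
  "is_dist Q \<longleftrightarrow> (\<forall>i. Q $ i \<ge> 0) \<and> (\<Sum>i\<in>UNIV. Q $ i) = 1"

definition mTX :: "('t::finite,'x::finite,'y::finite) jdist \<Rightarrow> 't \<Rightarrow> 'x \<Rightarrow> real" where
  "mTX Q t x = (\<Sum>y\<in>UNIV. Q $ (t,x,y))"

definition mTY :: "('t::finite,'x::finite,'y::finite) jdist \<Rightarrow> 't \<Rightarrow> 'y \<Rightarrow> real" where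
  "mTY Q t y = (\<Sum>x\<in>UNIV. Q $ (t,x,y))"

definition mXY :: "('t::finite,'x::finite,'y::finite) jdist \<Rightarrow> 'x \<Rightarrow> 'y \<Rightarrow> real" where
  "mXY Q x y = (\<Sum>t\<in>UNIV. Q $ (t,x,y))"

definition mX :: "('t::finite,'x::finite,'y::finite) jdist \<Rightarrow> 'x \<Rightarrow> real" where
  "mX Q x = (\<Sum>t\<in>UNIV. \<Sum>y\<in>UNIV. Q $ (t,x,y))"

definition mY :: "('t::finite,'x::finite,'y::finite) jdist \<Rightarrow> 'y \<Rightarrow> real" where
  "mY Q y = (\<Sum>t\<in>UNIV. \<Sum>x\<in>UNIV. Q $ (t,x,y))"

definition DeltaP :: "('t::finite,'x::finite,'y::finite) jdist \<Rightarrow> ('t,'x,'y) jdist set" where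
  "DeltaP P = {Q. is_dist Q \<and> (\<forall>t x. mTX Q t x = mTX P t x) \<and> (\<forall>t y. mTY Q t y = mTY P t y)}"

definition supp_DeltaP :: "('t::finite,'x::finite,'y::finite) jdist \<Rightarrow> ('t \<times> 'x \<times> 'y) set" where
  "supp_DeltaP P = (\<Union>Q\<in>DeltaP P. {i. Q $ i \<noteq> 0})"

definition condH_T_XY :: "('t::finite,'x::finite,'y::finite) jdist \<Rightarrow> real" where
  "condH_T_XY Q = - (\<Sum>(t,x,y)\<in>UNIV.
      if Q $ (t,x,y) = 0 then 0 else Q $ (t,x,y) * ln (Q $ (t,x,y) / mXY Q x y))"

definition condMI_TX_Y :: "('t::finite,'x::finite,'y::finite) jdist \<Rightarrow> real" where
  "condMI_TX_Y Q = (\<Sum>(t,x,y)\<in>UNIV.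
      if Q $ (t,x,y) = 0 then 0
      else Q $ (t,x,y) * ln (Q $ (t,x,y) * mY Q y / (mTY Q t y * mXY Q x y)))"

definition condMI_TY_X :: "('t::finite,'x::finite,'y::finite) jdist \<Rightarrow> real" where
  "condMI_TY_X Q = (\<Sum>(t,x,y)\<in>UNIV.
      if Q $ (t,x,y) = 0 then 0
      else Q $ (t,x,y) * ln (Q $ (t,x,y) * mX Q x / (mTX Q t x * mXY Q x y)))"

text \<open>Unique informations (the minimum over Delta_P, written as an infimum; it is attained).\<close>
definition UI_X :: "('t::finite,'x::finite,'y::finite) jdist \<Rightarrow> real" where
  "UI_X P = Inf (condMI_TX_Y ` DeltaP P)"

definition UI_Y :: "('t::finite,'x::finite,'y::finite) jdist \<Rightarrow> real" where
  "UI_Y P = Inf (condMI_TY_X ` DeltaP P)"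

end

theory Submission
  imports Defs
begin

text \<open>Since H(T|X,Y) + I(T:X|Y) = H(T|Y) is constant on \<open>DeltaP P\<close>, an entropy
  maximizer minimizes I(T:X|Y). If UI(T:X\Y) = 0, the maximizer \<open>Qt\<close> therefore makes T and
  X conditionally independent given Y: \<open>Qt(t,x,y) = a(t,y) Qt(x,y)\<close>. All products of this
  form with the same \<open>a\<close> and the same (T,Y)-marginal have the same conditional entropy, and
  replacing \<open>Qt(x,y)\<close> by \<open>Qt(x,y) + r(x,y)\<close>, where \<open>\<Sum>\<^sub>x r(x,y) = 0\<close> and
  \<open>\<Sum>\<^sub>y a(t,y) r(x,y) = 0\<close>, preserves both pairwise marginals with T. For binary T these are
  only two linear conditions on each \<open>r(x,-)\<close>, so a small nonzero solution exists as soon as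
  |Y| > 2. The case UI(T:Y\X) = 0 follows by exchanging X and Y.\<close>

lemma sum_UNIV_prod3:
  "(\<Sum>i\<in>(UNIV::('a::finite \<times> 'b::finite \<times> 'c::finite) set). f i)
     = (\<Sum>t\<in>UNIV. \<Sum>x\<in>UNIV. \<Sum>y\<in>UNIV. f (t,x,y))"
  by (simp add: UNIV_Times_UNIV[symmetric] sum.cartesian_product' del: UNIV_Times_UNIV)

lemma ln_less_minus_one:
  assumes "(u::real) > 0" "u \<noteq> 1"
  shows "ln u < u - 1"
proof -
  have s: "sqrt u > 0" "sqrt u \<noteq> 1" using assms by auto
  have "ln u = 2 * ln (sqrt u)" using assms by (simp add: ln_sqrt)
  also have "\<dots> \<le> 2 * (sqrt u - 1)" using ln_le_minus_one[OF s(1)] by simp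
  also have "\<dots> < u - 1"
  proof -
    have "(sqrt u - 1)^2 > 0" using s by simp
    moreover have "(sqrt u - 1)^2 = u - 2 * sqrt u + 1"
      using assms by (simp add: power2_eq_square algebra_simps)
    ultimately show ?thesis by simp
  qed
  finally show ?thesis .
qed

lemma mult_ln_div_le:
  fixes p q :: real
  assumes "p > 0" "q > 0"
  shows "p * ln (q / p) \<le> q - p"
proof -
  have "p * ln (q / p) \<le> p * (q / p - 1)"
    using assms ln_le_minus_one[of "q / p"] by (intro mult_left_mono) simp_all
  then show ?thesis using assms by (simp add: right_diff_distrib)
qed

lemma mult_ln_div_less:
  fixes p q :: real
  assumes "p > 0" "q > 0" "q \<noteq> p"
  shows "p * ln (q / p) < q - p"
proof -
  have "p * ln (q / p) < p * (q / p - 1)"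
    using assms ln_less_minus_one[of "q / p"] by (intro mult_strict_left_mono) simp_all
  then show ?thesis using assms by (simp add: right_diff_distrib)
qed

lemma gibbs_equality:
  fixes p q :: "'a \<Rightarrow> real"
  assumes "finite S" and "\<And>i. i \<in> S \<Longrightarrow> p i > 0" and "\<And>i. i \<in> S \<Longrightarrow> q i > 0"
    and "sum q S = sum p S" and "(\<Sum>i\<in>S. p i * ln (q i / p i)) = 0" and "i \<in> S"
  shows "q i = p i"
proof (rule ccontr)
  assume "q i \<noteq> p i"
  then have "(\<Sum>i\<in>S. p i * ln (q i / p i)) < (\<Sum>i\<in>S. q i - p i)"
    using assms by (intro sum_strict_mono_ex1) (auto intro: mult_ln_div_le mult_ln_div_less)
  also have "\<dots> = 0" using assms(4) by (simp add: sum_subtractf)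
  finally show False using assms(5) by simp
qed

lemma marginals_ge_entry:
  fixes Q :: "('t::finite,'x::finite,'y::finite) jdist"
  assumes "is_dist Q"
  shows "Q$(t,x,y) \<le> mXY Q x y" "Q$(t,x,y) \<le> mTY Q t y" "mTY Q t y \<le> mY Q y"
proof -
  have nn: "Q$i \<ge> 0" for i using assms unfolding is_dist_def by blast
  show "Q$(t,x,y) \<le> mXY Q x y" unfolding mXY_def
    by (rule member_le_sum[where f="\<lambda>t. Q$(t,x,y)"]) (auto simp: nn)
  show "Q$(t,x,y) \<le> mTY Q t y" unfolding mTY_def
    by (rule member_le_sum[where f="\<lambda>x. Q$(t,x,y)"]) (auto simp: nn)
  show "mTY Q t y \<le> mY Q y" unfolding mY_def mTY_def
    by (rule member_le_sum[where f="\<lambda>t. \<Sum>x\<in>UNIV. Q$(t,x,y)"]) (auto simp: nn sum_nonneg)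
qed

lemma marginals_pos:
  fixes Q :: "('t::finite,'x::finite,'y::finite) jdist"
  assumes "is_dist Q" "Q$(t,x,y) > 0"
  shows "mXY Q x y > 0" "mTY Q t y > 0" "mY Q y > 0"
  using marginals_ge_entry(1,2)[OF assms(1), of t x y] marginals_ge_entry(3)[OF assms(1), of t y]
    assms(2) by linarith+

lemma mY_eq_sum_mTY: "mY Q y = (\<Sum>t\<in>UNIV. mTY Q t y)"
  by (simp add: mY_def mTY_def)

lemma mY_eq_sum_mXY: "mY Q y = (\<Sum>x\<in>UNIV. mXY Q x y)"
  unfolding mY_def mXY_def by (rule sum.swap)

lemma sum_mTX_eq_1:
  assumes "is_dist Q"
  shows "(\<Sum>t\<in>UNIV. \<Sum>x\<in>UNIV. mTX Q t x) = 1"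
  using assms unfolding is_dist_def mTX_def sum_UNIV_prod3 by simp

lemma sum_mTY_eq_1:
  assumes "is_dist Q"
  shows "(\<Sum>t\<in>UNIV. \<Sum>y\<in>UNIV. mTY Q t y) = 1"
proof -
  have "(\<Sum>t\<in>UNIV. \<Sum>y\<in>UNIV. mTY Q t y) = (\<Sum>t\<in>UNIV. \<Sum>x\<in>UNIV. mTX Q t x)"
    unfolding mTY_def mTX_def by (rule sum.cong[OF refl], rule sum.swap)
  with sum_mTX_eq_1[OF assms] show ?thesis by simp
qed

lemma condH_T_XY_plus_condMI_TX_Y:
  fixes Q :: "('t::finite,'x::finite,'y::finite) jdist"
  assumes "is_dist Q"
  shows "condH_T_XY Q + condMI_TX_Y Q
    = (\<Sum>t\<in>UNIV. \<Sum>y\<in>UNIV. mTY Q t y * ln (mY Q y / mTY Q t y))"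
proof -
  have nn: "Q$i \<ge> 0" for i using assms unfolding is_dist_def by blast
  have term_diff:
    "(if Q$(t,x,y) = 0 then 0 else Q$(t,x,y) * ln (Q$(t,x,y) * mY Q y / (mTY Q t y * mXY Q x y)))
     - (if Q$(t,x,y) = 0 then 0 else Q$(t,x,y) * ln (Q$(t,x,y) / mXY Q x y))
     = Q$(t,x,y) * ln (mY Q y / mTY Q t y)" for t x y
  proof (cases "Q$(t,x,y) = 0")
    case False
    then have q: "Q$(t,x,y) > 0" using nn[of "(t,x,y)"] by linarith
    note m = marginals_pos[OF assms q]
    have "ln (Q$(t,x,y) * mY Q y / (mTY Q t y * mXY Q x y)) - ln (Q$(t,x,y) / mXY Q x y)
          = ln (mY Q y / mTY Q t y)"
      using q m by (simp add: ln_div ln_mult)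
    then show ?thesis using False by (simp add: algebra_simps)
  qed simp
  have "condH_T_XY Q + condMI_TX_Y Q
      = (\<Sum>t\<in>UNIV. \<Sum>x\<in>UNIV. \<Sum>y\<in>UNIV. Q$(t,x,y) * ln (mY Q y / mTY Q t y))"
    unfolding condH_T_XY_def condMI_TX_Y_def sum_UNIV_prod3 term_diff[symmetric]
    by (simp add: sum_subtractf)
  also have "\<dots> = (\<Sum>t\<in>UNIV. \<Sum>y\<in>UNIV. \<Sum>x\<in>UNIV. Q$(t,x,y) * ln (mY Q y / mTY Q t y))"
    by (rule sum.cong[OF refl], rule sum.swap)
  also have "\<dots> = (\<Sum>t\<in>UNIV. \<Sum>y\<in>UNIV. mTY Q t y * ln (mY Q y / mTY Q t y))"
    by (simp add: mTY_def sum_distrib_right)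
  finally show ?thesis .
qed

lemma condMI_TX_Y_eq_0_imp_factorizes:
  fixes Q :: "('t::finite,'x::finite,'y::finite) jdist"
  assumes dist: "is_dist Q" and pos: "\<And>i. Q$i > 0" and mi: "condMI_TX_Y Q = 0"
  shows "Q$(t,x,y) = mTY Q t y / mY Q y * mXY Q x y"
proof -
  \<comment> \<open>I(T:X|Y) is the relative entropy of \<open>Q\<close> with respect to \<open>q\<close>\<close>
  define q where "q i = (case i of (t,x,y) \<Rightarrow> mTY Q t y / mY Q y * mXY Q x y)" for i
  have q_pos: "q i > 0" for i
    using marginals_pos[OF dist pos] by (auto simp: q_def split: prod.split)
  have "sum q UNIV = (\<Sum>t\<in>UNIV. \<Sum>y\<in>UNIV. mTY Q t y / mY Q y * (\<Sum>x\<in>UNIV. mXY Q x y))"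
    unfolding q_def sum_UNIV_prod3
    by (simp add: sum_distrib_left, rule sum.cong[OF refl], rule sum.swap)
  also have "\<dots> = (\<Sum>t\<in>UNIV. \<Sum>y\<in>UNIV. mTY Q t y)"
    using marginals_pos(3)[OF dist pos] by (simp flip: mY_eq_sum_mXY add: less_imp_not_eq2)
  also have "\<dots> = sum (\<lambda>i. Q$i) UNIV"
    using sum_mTY_eq_1[OF dist] dist by (simp add: is_dist_def)
  finally have sum_q: "sum q UNIV = sum (\<lambda>i. Q$i) UNIV" .
  have "Q$i * ln (q i / Q$i) = - (case i of (t,x,y) \<Rightarrow> if Q$(t,x,y) = 0 then 0
      else Q$(t,x,y) * ln (Q$(t,x,y) * mY Q y / (mTY Q t y * mXY Q x y)))" for i
    using pos[of i] marginals_pos[OF dist pos]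
    by (auto simp: q_def ln_div ln_mult algebra_simps split: prod.split)
  then have "(\<Sum>i\<in>UNIV. Q$i * ln (q i / Q$i)) = - condMI_TX_Y Q"
    unfolding condMI_TX_Y_def by (simp add: sum_negf)
  with mi have "(\<Sum>i\<in>UNIV. Q$i * ln (q i / Q$i)) = 0" by simp
  from gibbs_equality[of UNIV "\<lambda>i. Q$i" q, OF _ pos q_pos sum_q this, of "(t,x,y)"]
  show ?thesis by (simp add: q_def)
qed

lemma condH_T_XY_factorized:
  fixes Q :: "('t::finite,'x::finite,'y::finite) jdist"
  assumes "\<And>t x y. Q$(t,x,y) = a t y * mXY Q x y"
  shows "condH_T_XY Q = - (\<Sum>t\<in>UNIV. \<Sum>y\<in>UNIV. mTY Q t y * ln (a t y))"
proof -
  have "(if Q$(t,x,y) = 0 then 0 else Q$(t,x,y) * ln (Q$(t,x,y) / mXY Q x y))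
      = Q$(t,x,y) * ln (a t y)" for t x y
    using assms[of t x y] by auto
  then have "condH_T_XY Q = - (\<Sum>t\<in>UNIV. \<Sum>x\<in>UNIV. \<Sum>y\<in>UNIV. Q$(t,x,y) * ln (a t y))"
    unfolding condH_T_XY_def sum_UNIV_prod3 by simp
  also have "\<dots> = - (\<Sum>t\<in>UNIV. \<Sum>y\<in>UNIV. \<Sum>x\<in>UNIV. Q$(t,x,y) * ln (a t y))"
    by (simp, rule sum.cong[OF refl], rule sum.swap)
  also have "\<dots> = - (\<Sum>t\<in>UNIV. \<Sum>y\<in>UNIV. mTY Q t y * ln (a t y))"
    by (simp add: mTY_def sum_distrib_right)
  finally show ?thesis .
qed

lemma convex_DeltaP:
  fixes P :: "('t::finite,'x::finite,'y::finite) jdist"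
  shows "convex (DeltaP P)"
  unfolding convex_def
proof (intro ballI allI impI)
  fix Q1 Q2 :: "('t,'x,'y) jdist" and u v :: real
  assume Q: "Q1 \<in> DeltaP P" "Q2 \<in> DeltaP P" and uv: "0 \<le> u" "0 \<le> v" "u + v = 1"
  let ?R = "u *\<^sub>R Q1 + v *\<^sub>R Q2"
  have d1: "is_dist Q1" and d2: "is_dist Q2" using Q by (simp_all add: DeltaP_def)
  have nn: "?R $ i \<ge> 0" for i
    using d1 d2 uv unfolding is_dist_def by (cases i) (auto intro!: add_nonneg_nonneg mult_nonneg_nonneg)
  have sum: "(\<Sum>i\<in>UNIV. ?R $ i) = 1"
    using d1 d2 uv unfolding is_dist_def by (simp add: sum.distrib sum_distrib_left[symmetric])
  have "mTX ?R t x = u * mTX Q1 t x + v * mTX Q2 t x" for t x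
    by (simp add: mTX_def sum.distrib sum_distrib_left)
  moreover have "mTY ?R t y = u * mTY Q1 t y + v * mTY Q2 t y" for t y
    by (simp add: mTY_def sum.distrib sum_distrib_left)
  ultimately show "?R \<in> DeltaP P"
    using Q uv nn sum by (simp add: DeltaP_def is_dist_def algebra_simps flip: distrib_right)
qed

lemma rel_interior_DeltaP_pos:
  assumes "supp_DeltaP P = UNIV" "Qt \<in> rel_interior (DeltaP P)"
  shows "Qt$i > 0"
proof -
  have QtD: "Qt \<in> DeltaP P" using assms(2) rel_interior_subset by blast
  obtain Q where Q: "Q \<in> DeltaP P" "Q$i \<noteq> 0"
    using assms(1) unfolding supp_DeltaP_def by blast
  have "Q$i \<ge> 0" using Q(1) unfolding DeltaP_def is_dist_def by blast
  with Q(2) have Q_pos: "Q$i > 0" by simp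
  obtain e where e: "e > 1" "(1 - e) *\<^sub>R Q + e *\<^sub>R Qt \<in> DeltaP P"
    using convex_rel_interior_iff[OF convex_DeltaP, of P Qt] assms(2) QtD Q(1) by blast
  have "((1 - e) *\<^sub>R Q + e *\<^sub>R Qt) $ i \<ge> 0"
    using e(2) unfolding DeltaP_def is_dist_def by blast
  then have "(1 - e) * Q$i + e * Qt$i \<ge> 0" by simp
  moreover have "(e - 1) * Q$i > 0" using e(1) Q_pos by simp
  ultimately have "e * Qt$i > 0" by (simp add: algebra_simps)
  then show ?thesis using e(1) by (simp add: zero_less_mult_iff)
qed

lemma maximizer_condMI_TX_Y_eq_UI_X:
  assumes "Qt \<in> DeltaP P" and "\<forall>Q\<in>DeltaP P. condH_T_XY Q \<le> condH_T_XY Qt"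
  shows "condMI_TX_Y Qt = UI_X P"
proof -
  have "condH_T_XY Q + condMI_TX_Y Q = condH_T_XY Qt + condMI_TX_Y Qt" if "Q \<in> DeltaP P" for Q
    using that assms(1) condH_T_XY_plus_condMI_TX_Y[of Q] condH_T_XY_plus_condMI_TX_Y[of Qt]
    by (simp add: DeltaP_def mY_eq_sum_mTY)
  with assms show ?thesis
    unfolding UI_X_def by (intro cInf_eq_minimum[symmetric]) force+
qed

lemma ex_nonzero_sum_eq_0_weighted_sum_eq_0:
  fixes b :: "'a::finite \<Rightarrow> real"
  assumes "CARD('a) > 2"
  shows "\<exists>v. (\<Sum>y\<in>UNIV. v y) = 0 \<and> (\<Sum>y\<in>UNIV. b y * v y) = 0 \<and> (\<exists>y. v y \<noteq> 0)"
proof -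
  obtain S :: "'a set" where "card S = 3"
    using obtain_subset_with_card_n[of 3 "UNIV :: 'a set"] assms by auto
  then obtain y1 y2 y3 :: 'a where y: "y1 \<noteq> y2" "y2 \<noteq> y3" "y1 \<noteq> y3"
    unfolding card_3_iff by blast
  have on_three_points: "\<exists>v. (\<Sum>y\<in>UNIV. v y) = 0 \<and> (\<Sum>y\<in>UNIV. b y * v y) = 0 \<and> (\<exists>y. v y \<noteq> 0)"
    if "c1 + c2 + c3 = 0" "b y1 * c1 + b y2 * c2 + b y3 * c3 = 0" "c1 \<noteq> 0 \<or> c3 \<noteq> 0" for c1 c2 c3
  proof -
    define v where "v y = (if y = y1 then c1 else 0) + (if y = y2 then c2 else 0)
      + (if y = y3 then c3 else 0)" for y
    have "b y * v y = (if y = y1 then b y1 * c1 else 0) + (if y = y2 then b y2 * c2 else 0)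
        + (if y = y3 then b y3 * c3 else 0)" for y
      by (simp add: v_def distrib_left)
    then have "(\<Sum>y\<in>UNIV. v y) = c1 + c2 + c3" "(\<Sum>y\<in>UNIV. b y * v y) = b y1 * c1 + b y2 * c2 + b y3 * c3"
      by (simp_all add: v_def sum.distrib)
    moreover have "v y1 = c1" "v y3 = c3" using y by (simp_all add: v_def)
    ultimately show ?thesis using that by metis
  qed
  show ?thesis
  proof (cases "b y1 = b y2")
    case True
    then show ?thesis using on_three_points[of 1 "-1" 0] by (simp add: algebra_simps)
  next
    case False
    \<comment> \<open>the cross product of \<open>(1,1,1)\<close> and \<open>(b y1, b y2, b y3)\<close>\<close>
    then show ?thesis
      using on_three_points[of "b y3 - b y2" "b y1 - b y3" "b y2 - b y1"] by (simp add: algebra_simps)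
  qed
qed

lemma ex_pos_small_perturbation:
  fixes f g :: "'a::finite \<Rightarrow> real"
  assumes "\<And>i. f i > 0"
  shows "\<exists>e>0. \<forall>i. f i + e * g i > 0"
proof -
  have "\<forall>\<^sub>F e in at_right 0. \<forall>i. f i + e * g i > 0"
    by (intro eventually_all_finite order_tendstoD(1)[of _ "f _"] assms)
       (auto intro!: tendsto_eq_intros)
  moreover have "\<forall>\<^sub>F e in at_right (0::real). e > 0"
    by (simp add: eventually_at_right_less)
  ultimately show ?thesis
    by (metis (mono_tags, lifting) eventually_conj eventually_happens' trivial_limit_at_right_real)
qed

lemma factorized_perturbation:
  fixes Qt :: "('t::finite,'x::finite,'y::finite) jdist"
  assumes Qt: "Qt \<in> DeltaP P"
    and fac: "\<And>t x y. Qt$(t,x,y) = a t y * mXY Qt x y"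
    and a_sum: "\<And>y. (\<Sum>t\<in>UNIV. a t y) = 1"
    and r_sum_x: "\<And>y. (\<Sum>x\<in>UNIV. r x y) = 0"
    and r_sum_y: "\<And>t x. (\<Sum>y\<in>UNIV. a t y * r x y) = 0"
    and nonneg: "\<And>t x y. Qt$(t,x,y) + a t y * r x y \<ge> 0"
  defines "Q \<equiv> vec_lambda (\<lambda>(t,x,y). Qt$(t,x,y) + a t y * r x y)"
  shows "Q \<in> DeltaP P" and "condH_T_XY Q = condH_T_XY Qt"
proof -
  have Q_nth: "Q$(t,x,y) = Qt$(t,x,y) + a t y * r x y" for t x y
    by (simp add: Q_def)
  have mTY_Q: "mTY Q t y = mTY Qt t y" for t y
    using r_sum_x[of y] by (simp add: mTY_def Q_nth sum.distrib flip: sum_distrib_left)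
  have mTX_Q: "mTX Q t x = mTX Qt t x" for t x
    using r_sum_y[of t x] by (simp add: mTX_def Q_nth sum.distrib)
  have "mXY Q x y = mXY Qt x y + r x y" for x y
    using a_sum[of y] by (simp add: mXY_def Q_nth sum.distrib flip: sum_distrib_right)
  then have fac_Q: "Q$(t,x,y) = a t y * mXY Q x y" for t x y
    by (simp add: Q_nth fac distrib_left)
  have dist_Qt: "is_dist Qt" using Qt by (simp add: DeltaP_def)
  have "(\<Sum>i\<in>UNIV. Q$i) = 1"
    using sum_mTX_eq_1[OF dist_Qt] unfolding sum_UNIV_prod3 by (simp flip: mTX_def add: mTX_Q)
  moreover have "Q$i \<ge> 0" for i
    using nonneg by (cases i) (simp add: Q_nth)
  ultimately have "is_dist Q" by (simp add: is_dist_def)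
  with Qt show "Q \<in> DeltaP P" by (simp add: DeltaP_def mTX_Q mTY_Q)
  show "condH_T_XY Q = condH_T_XY Qt"
    using condH_T_XY_factorized[OF fac_Q] condH_T_XY_factorized[OF fac] by (simp add: mTY_Q)
qed

lemma ex_nonzero_perturbation_direction:
  fixes a :: "'t::finite \<Rightarrow> 'y::finite \<Rightarrow> real"
  assumes "CARD('t) = 2" and "CARD('x::finite) \<ge> 2" and "CARD('y) > 2"
    and a_sum: "\<And>y. (\<Sum>t\<in>UNIV. a t y) = 1"
  shows "\<exists>r :: 'x \<Rightarrow> 'y \<Rightarrow> real. (\<forall>y. (\<Sum>x\<in>UNIV. r x y) = 0)
    \<and> (\<forall>t x. (\<Sum>y\<in>UNIV. a t y * r x y) = 0) \<and> (\<exists>x y. r x y \<noteq> 0)"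
proof -
  obtain t0 t1 :: 't where T: "UNIV = {t0, t1}" "t0 \<noteq> t1"
    using assms(1) card_2_iff by metis
  obtain X :: "'x set" where "card X = 2"
    using obtain_subset_with_card_n[of 2 "UNIV :: 'x set"] assms(2) by auto
  then obtain x1 x2 :: 'x where x12: "x1 \<noteq> x2"
    unfolding card_2_iff by blast
  obtain v y0 where v_sum: "(\<Sum>y\<in>UNIV. v y) = 0" and v_a: "(\<Sum>y\<in>UNIV. a t1 y * v y) = 0"
    and y0: "v y0 \<noteq> 0"
    using ex_nonzero_sum_eq_0_weighted_sum_eq_0[OF assms(3), of "a t1"] by blast
  have "a t0 y = 1 - a t1 y" for y
    using a_sum[of y] T(2) unfolding T(1) by simp
  then have "(\<Sum>y\<in>UNIV. a t0 y * v y) = 0"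
    using v_sum v_a by (simp add: left_diff_distrib sum_subtractf)
  with v_a T have v_a_all: "(\<Sum>y\<in>UNIV. a t y * v y) = 0" for t
    by (metis UNIV_I empty_iff insert_iff)
  define r where "r x y = (if x = x1 then v y else if x = x2 then - v y else 0)" for x y
  have "(\<Sum>x\<in>UNIV. r x y) = 0" for y
  proof -
    have "r x y = (if x = x1 then v y else 0) + (if x = x2 then - v y else 0)" for x
      using x12 by (simp add: r_def)
    then show ?thesis by (simp add: sum.distrib)
  qed
  moreover have "(\<Sum>y\<in>UNIV. a t y * r x y) = 0" for t x
    using v_a_all[of t] by (cases "x = x1"; cases "x = x2") (simp_all add: r_def sum_negf)
  moreover have "r x1 y0 \<noteq> 0" using y0 by (simp add: r_def)
  ultimately show ?thesis by blast
qed

lemma condMI_TX_Y_eq_0_imp_ex_same_condH: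
  fixes Qt :: "('t::finite,'x::finite,'y::finite) jdist"
  assumes "CARD('t) = 2" and "CARD('x) \<ge> 2" and "CARD('y) > 2"
    and Qt: "Qt \<in> DeltaP P" and pos: "\<And>i. Qt$i > 0" and mi: "condMI_TX_Y Qt = 0"
  shows "\<exists>Q\<in>DeltaP P. Q \<noteq> Qt \<and> condH_T_XY Q = condH_T_XY Qt"
proof -
  have dist: "is_dist Qt" using Qt by (simp add: DeltaP_def)
  define a where "a t y = mTY Qt t y / mY Qt y" for t y
  have fac: "Qt$(t,x,y) = a t y * mXY Qt x y" for t x y
    using condMI_TX_Y_eq_0_imp_factorizes[OF dist pos mi] by (simp add: a_def)
  have a_pos: "a t y > 0" for t y
    using marginals_pos(2,3)[OF dist pos] by (simp add: a_def)
  have a_sum: "(\<Sum>t\<in>UNIV. a t y) = 1" for y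
    using marginals_pos(3)[OF dist pos, of y]
    by (simp add: a_def mY_eq_sum_mTY[of Qt y] flip: sum_divide_distrib)
  obtain r :: "'x \<Rightarrow> 'y \<Rightarrow> real" and x0 y0 where r_sum_x: "\<And>y. (\<Sum>x\<in>UNIV. r x y) = 0"
    and r_sum_y: "\<And>t x. (\<Sum>y\<in>UNIV. a t y * r x y) = 0" and r_nz: "r x0 y0 \<noteq> 0"
    using ex_nonzero_perturbation_direction[OF assms(1-3), of a] a_sum by blast
  obtain e :: real where e: "e > 0" "\<forall>i. Qt$i + e * (case i of (t,x,y) \<Rightarrow> a t y * r x y) > 0"
    using ex_pos_small_perturbation[of "\<lambda>i. Qt$i"] pos by blast
  define Q :: "('t,'x,'y) jdist" where "Q = vec_lambda (\<lambda>(t,x,y). Qt$(t,x,y) + a t y * (e * r x y))"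
  have nonneg: "Qt$(t,x,y) + a t y * (e * r x y) \<ge> 0" for t x y
    using e(2)[rule_format, of "(t,x,y)"] by (simp add: algebra_simps)
  have "Q \<in> DeltaP P" "condH_T_XY Q = condH_T_XY Qt"
    using factorized_perturbation[of Qt P a "\<lambda>x y. e * r x y", OF Qt fac a_sum _ _ nonneg]
      r_sum_x r_sum_y by (simp_all add: Q_def sum_distrib_left[symmetric] mult.left_commute[of _ e])
  moreover have "Q \<noteq> Qt"
  proof
    fix t :: 't
    assume "Q = Qt"
    then have "Q$(t,x0,y0) = Qt$(t,x0,y0)" by simp
    then have "a t y0 * (e * r x0 y0) = 0" by (simp add: Q_def)
    with a_pos[of t y0] e(1) r_nz show False by simp
  qed
  ultimately show ?thesis by blast
qed

lemma ex_other_maximizer_if_UI_X_eq_0: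
  fixes P Qt :: "('t::finite,'x::finite,'y::finite) jdist"
  assumes "CARD('t) = 2" and "CARD('x) \<ge> 2" and "CARD('y) > 2"
    and "Qt \<in> DeltaP P" and "\<And>i. Qt$i > 0"
    and "\<forall>Q\<in>DeltaP P. condH_T_XY Q \<le> condH_T_XY Qt" and "UI_X P = 0"
  shows "\<exists>Q\<in>DeltaP P. Q \<noteq> Qt \<and> condH_T_XY Q = condH_T_XY Qt"
  using condMI_TX_Y_eq_0_imp_ex_same_condH[OF assms(1-5)]
    maximizer_condMI_TX_Y_eq_UI_X[OF assms(4,6)] assms(7) by simp

definition swap_XY :: "('t::finite,'x::finite,'y::finite) jdist \<Rightarrow> ('t,'y,'x) jdist" where
  "swap_XY Q = vec_lambda (\<lambda>(t,y,x). Q$(t,x,y))"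

lemma swap_XY_nth [simp]: "swap_XY Q $ (t,y,x) = Q$(t,x,y)"
  by (simp add: swap_XY_def)

lemma swap_XY_swap_XY [simp]: "swap_XY (swap_XY Q) = Q"
  by (auto simp: vec_eq_iff swap_XY_def split: prod.splits)

lemma swap_XY_marginals [simp]:
  "mTX (swap_XY Q) t y = mTY Q t y" "mTY (swap_XY Q) t x = mTX Q t x"
  "mXY (swap_XY Q) y x = mXY Q x y" "mX (swap_XY Q) y = mY Q y" "mY (swap_XY Q) x = mX Q x"
  by (simp_all add: mTX_def mTY_def mXY_def mX_def mY_def)

lemma sum_UNIV_swap_XY:
  fixes f :: "'t::finite \<times> 'x::finite \<times> 'y::finite \<Rightarrow> 'a::comm_monoid_add"
  assumes "\<And>t x y. g (t,y,x) = f (t,x,y)"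
  shows "(\<Sum>i\<in>UNIV. g i) = (\<Sum>i\<in>UNIV. f i)"
  by (rule sum.reindex_bij_witness[of _ "\<lambda>(t,x,y). (t,y,x)" "\<lambda>(t,x,y). (t,y,x)"])
     (auto simp: assms)

lemma is_dist_swap_XY [simp]: "is_dist (swap_XY Q) \<longleftrightarrow> is_dist Q"
proof -
  have "(\<forall>i. swap_XY Q $ i \<ge> 0) \<longleftrightarrow> (\<forall>i. Q $ i \<ge> 0)" by auto
  moreover have "(\<Sum>i\<in>UNIV. swap_XY Q $ i) = (\<Sum>i\<in>UNIV. Q $ i)"
    by (rule sum_UNIV_swap_XY) simp
  ultimately show ?thesis unfolding is_dist_def by simp
qed

lemma condH_T_XY_swap_XY [simp]: "condH_T_XY (swap_XY Q) = condH_T_XY Q"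
  unfolding condH_T_XY_def by (subst sum_UNIV_swap_XY) auto

lemma condMI_TX_Y_swap_XY [simp]: "condMI_TX_Y (swap_XY Q) = condMI_TY_X Q"
  unfolding condMI_TX_Y_def condMI_TY_X_def by (rule sum_UNIV_swap_XY) simp

lemma DeltaP_swap_XY:
  fixes P :: "('t::finite,'x::finite,'y::finite) jdist"
  shows "DeltaP (swap_XY P) = swap_XY ` DeltaP P"
proof -
  have mem: "swap_XY Q \<in> DeltaP (swap_XY P) \<longleftrightarrow> Q \<in> DeltaP P" for Q :: "('t,'x,'y) jdist"
    by (auto simp: DeltaP_def)
  have "DeltaP (swap_XY P) \<subseteq> swap_XY ` DeltaP P"
  proof
    fix Q assume "Q \<in> DeltaP (swap_XY P)"
    then have "swap_XY Q \<in> DeltaP P" using mem[of "swap_XY Q"] by simp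
    then show "Q \<in> swap_XY ` DeltaP P" using image_eqI[of Q swap_XY "swap_XY Q"] by simp
  qed
  with mem show ?thesis by blast
qed

lemma UI_X_swap_XY: "UI_X (swap_XY P) = UI_Y P"
  unfolding UI_X_def UI_Y_def DeltaP_swap_XY image_image by simp

lemma ex_other_maximizer_if_UI_Y_eq_0:
  fixes P Qt :: "('t::finite,'x::finite,'y::finite) jdist"
  assumes "CARD('t) = 2" and "CARD('y) \<ge> 2" and "CARD('x) > 2"
    and Qt: "Qt \<in> DeltaP P" and pos: "\<And>i. Qt$i > 0"
    and max: "\<forall>Q\<in>DeltaP P. condH_T_XY Q \<le> condH_T_XY Qt" and "UI_Y P = 0"
  shows "\<exists>Q\<in>DeltaP P. Q \<noteq> Qt \<and> condH_T_XY Q = condH_T_XY Qt"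
proof -
  have "swap_XY Qt \<in> DeltaP (swap_XY P)" using Qt by (simp add: DeltaP_swap_XY)
  moreover have "swap_XY Qt $ i > 0" for i using pos by (cases i) simp
  moreover have "\<forall>Q\<in>DeltaP (swap_XY P). condH_T_XY Q \<le> condH_T_XY (swap_XY Qt)"
    using max by (simp add: DeltaP_swap_XY)
  moreover have "UI_X (swap_XY P) = 0" using assms(7) by (simp add: UI_X_swap_XY)
  ultimately obtain Q' where Q': "Q' \<in> DeltaP (swap_XY P)" "Q' \<noteq> swap_XY Qt"
      "condH_T_XY Q' = condH_T_XY (swap_XY Qt)"
    using ex_other_maximizer_if_UI_X_eq_0[OF assms(1-3)] by blast
  then obtain Q where "Q \<in> DeltaP P" "Q' = swap_XY Q" by (auto simp: DeltaP_swap_XY)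
  with Q' show ?thesis by auto
qed

theorem mainTheorem13:
  fixes P Qt :: "('t::finite,'x::finite,'y::finite) jdist"
  assumes "CARD('t) = 2" and "CARD('x) \<ge> 2" and "CARD('y) \<ge> 2"
    and "is_dist P"
    and "supp_DeltaP P = UNIV"
    and "Qt \<in> rel_interior (DeltaP P)"
    and "\<forall>Q\<in>DeltaP P. condH_T_XY Q \<le> condH_T_XY Qt"
    and "(UI_X P = 0 \<and> CARD('y) > 2) \<or> (UI_Y P = 0 \<and> CARD('x) > 2)"
  shows "\<exists>Q\<in>DeltaP P. Q \<noteq> Qt \<and> condH_T_XY Q = condH_T_XY Qt"
proof -
  have Qt: "Qt \<in> DeltaP P" using assms(6) rel_interior_subset by blast
  have pos: "Qt$i > 0" for i using rel_interior_DeltaP_pos[OF assms(5,6)] .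
  from assms(8) show ?thesis
  proof
    assume "UI_X P = 0 \<and> CARD('y) > 2"
    then show ?thesis using ex_other_maximizer_if_UI_X_eq_0[OF assms(1,2) _ Qt pos assms(7)] by blast
  next
    assume "UI_Y P = 0 \<and> CARD('x) > 2"
    then show ?thesis using ex_other_maximizer_if_UI_Y_eq_0[OF assms(1,3) _ Qt pos assms(7)] by blast
  qed
qed

end
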